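(* Let $G$ be a graph, $\mathcal R=\{G_v: v\in V(G)\}$ a family of pairwise vertex-disjoint graphs, and let $S$ be a Grundy dominating sequence of $G\hookleftarrow\mathcal R$. Then there exists a Grundy dominating sequence $S'$ of $G\hookleftarrow\mathcal R$ such that, for every $v\in V(G)$ with $\widehat{S'}\cap V(G_v)\neq\emptyset$ and $\ell_{S'}(v)\in I_{S'}$, it holds that (1) $f_{S'}(w)\in V(G_v)$ for all $w\in V(G_v)$, and (2) $|\widehat{S'}\cap V(G_v)|=\gamma_{gr}(G_v)$.
   Context: All graphs are finite and simple; $N[v]$ denotes the closed neighborhood. The $X$-join product $G\hookleftarrow \mathcal R$ has vertex set $\bigcup_{v\in V(G)}V(G_v)$, the edges of all $G_v$, and all edges between $V(G_u)$ and $V(G_v)$ whenever $uv\in E(G)$. For a sequence $S=(v_1,\dots,v_k)$ of distinct vertices, $\widehat S=\{v_1,\dots,v_k\}$, $|S|=k$, and $PN_S(v_i)=N[v_i]\setminus\bigcup_{j<i}N[v_j]$. $S$ is a legal dominating sequence if $\widehat S$ is dominating and all $PN_S(v_i)\neq\emptyset$; a Grundy dominating sequence is a legal dominating sequence of maximum length, this length being $\gamma_{gr}$. For a legal dominating sequence $S$, the footprinter $f_S(x)$ of a vertex $x$ is the unique $v\in\widehat S$ with $x\in PN_S(v)$, and $I_S=\{v: f_S(v)=v\}$. For $v\in V(G)$ with $\widehat S\cap V(G_v)\neq\emptyset$, $\ell_S(v)$ denotes the vertex of $\widehat S\cap V(G_v)$ appearing earliest in $S$. *)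

theory Defs
  imports Main
begin

text \<open>A graph is a pair (vertex set, edge relation); edges are stored as ordered
pairs in both directions.\<close>
type_synonym 'a graph = "'a set \<times> ('a \<times> 'a) set"

definition verts :: "'a graph \<Rightarrow> 'a set" where "verts G = fst G"
definition edges :: "'a graph \<Rightarrow> ('a \<times> 'a) set" where "edges G = snd G"

definition graph :: "'a graph \<Rightarrow> bool" where
  "graph G \<longleftrightarrow> finite (verts G) \<and> edges G \<subseteq> verts G \<times> verts G
     \<and> sym (edges G) \<and> irrefl (edges G)"

definition cnbh :: "'a graph \<Rightarrow> 'a \<Rightarrow> 'a set" where
  "cnbh G v = insert v {u. (v, u) \<in> edges G}"

text \<open>Private neighbourhood of the i-th entry (0-based) of a sequence S.\<close>
definition pn :: "'a graph \<Rightarrow> 'a list \<Rightarrow> nat \<Rightarrow> 'a set" where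
  "pn G S i = cnbh G (S ! i) - (\<Union>j<i. cnbh G (S ! j))"

definition legal_dom_seq :: "'a graph \<Rightarrow> 'a list \<Rightarrow> bool" where
  "legal_dom_seq G S \<longleftrightarrow> distinct S \<and> set S \<subseteq> verts G
     \<and> (\<Union>v\<in>set S. cnbh G v) = verts G
     \<and> (\<forall>i<length S. pn G S i \<noteq> {})"

definition grundy_dom_seq :: "'a graph \<Rightarrow> 'a list \<Rightarrow> bool" where
  "grundy_dom_seq G S \<longleftrightarrow> legal_dom_seq G S
     \<and> (\<forall>S'. legal_dom_seq G S' \<longrightarrow> length S' \<le> length S)"

definition grundy_dom_num :: "'a graph \<Rightarrow> nat" where
  "grundy_dom_num G = Max {length S | S. legal_dom_seq G S}"

definition footprinter :: "'a graph \<Rightarrow> 'a list \<Rightarrow> 'a \<Rightarrow> 'a" where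
  "footprinter G S x = (THE v. \<exists>i<length S. S ! i = v \<and> x \<in> pn G S i)"

definition self_footprinters :: "'a graph \<Rightarrow> 'a list \<Rightarrow> 'a set" where
  "self_footprinters G S = {v \<in> verts G. footprinter G S v = v}"

text \<open>X-join product G \<hookleftarrow> R, with R :: 'a \<Rightarrow> 'b graph giving G_v.\<close>
definition xjoin :: "'a graph \<Rightarrow> ('a \<Rightarrow> 'b graph) \<Rightarrow> 'b graph" where
  "xjoin G R = ((\<Union>v\<in>verts G. verts (R v)),
     (\<Union>v\<in>verts G. edges (R v)) \<union>
     {(x, y). \<exists>u w. (u, w) \<in> edges G \<and> x \<in> verts (R u) \<and> y \<in> verts (R w)})"

text \<open>l_S(v): the earliest entry of S lying in V(G_v).\<close>
definition first_in :: "'b list \<Rightarrow> 'b set \<Rightarrow> 'b" where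
  "first_in S A = hd (filter (\<lambda>x. x \<in> A) S)"

end

(* If the earliest entry x of S inside a block V(G_v) footprints itself, then no earlier entry
   dominates a vertex of V(G_v) or of an adjacent block: a vertex outside V(G_v) dominates either
   all of V(G_v) or none of it. Replace x by a Grundy dominating sequence D of G_v and prune from
   the remainder every entry whose new neighbours all lie in V(G_v), which D now dominates
   completely. Each pruned entry, like x itself, contributes a fresh vertex of V(G_v) to a legal
   sequence of G_v, so at most |D| entries are lost and the new sequence is again Grundy. It
   satisfies (1) and (2) at v, makes the hypothesis vacuous at the blocks adjacent to v, and does
   not change the situation at the other blocks; induction on the number of violating vertices
   concludes. *)

theory Submission
  imports Defs
begin

definition dominated :: "'b graph \<Rightarrow> 'b list \<Rightarrow> 'b set" where
  "dominated K L = (\<Union>z\<in>set L. cnbh K z)"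

lemma dominated_simps [simp]:
  "dominated K [] = {}"
  "dominated K (z # zs) = cnbh K z \<union> dominated K zs"
  "dominated K (xs @ ys) = dominated K xs \<union> dominated K ys"
  by (auto simp: dominated_def)

lemma cnbh_self: "z \<in> cnbh K z"
  by (simp add: cnbh_def)

lemma cnbh_subset_verts: "graph K \<Longrightarrow> z \<in> verts K \<Longrightarrow> cnbh K z \<subseteq> verts K"
  unfolding graph_def cnbh_def by auto

lemma dominated_subset_verts: "graph K \<Longrightarrow> set L \<subseteq> verts K \<Longrightarrow> dominated K L \<subseteq> verts K"
  unfolding dominated_def using cnbh_subset_verts[of K] by (meson UN_least subset_iff)

fun legal_from :: "'b graph \<Rightarrow> 'b set \<Rightarrow> 'b list \<Rightarrow> bool" where
  "legal_from K A [] \<longleftrightarrow> True"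
| "legal_from K A (z # zs) \<longleftrightarrow> \<not> cnbh K z \<subseteq> A \<and> legal_from K (A \<union> cnbh K z) zs"

lemma legal_from_append:
  "legal_from K A (xs @ ys) \<longleftrightarrow> legal_from K A xs \<and> legal_from K (A \<union> dominated K xs) ys"
  by (induction xs arbitrary: A) (auto simp: Un_assoc)

lemma legal_from_nth:
  "legal_from K A L \<longleftrightarrow> (\<forall>i<length L. \<not> cnbh K (L ! i) \<subseteq> A \<union> dominated K (take i L))"
  by (induction L arbitrary: A) (simp_all add: All_less_Suc2 Un_assoc)

lemma legal_from_mem: "legal_from K A L \<Longrightarrow> z \<in> set L \<Longrightarrow> \<not> cnbh K z \<subseteq> A"
  by (induction L arbitrary: A) auto

lemma legal_from_imp_distinct: "legal_from K A L \<Longrightarrow> distinct L"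
proof (induction L arbitrary: A)
  case (Cons z zs)
  then show ?case
    using legal_from_mem[of K "A \<union> cnbh K z" zs z] by auto
qed simp

lemma pn_eq_diff_dominated:
  assumes "i < length S"
  shows "pn K S i = cnbh K (S ! i) - dominated K (take i S)"
proof -
  have "set (take i S) = (!) S ` {..<i}"
    using assms by (simp add: nth_image lessThan_atLeast0)
  then show ?thesis
    unfolding pn_def dominated_def by auto
qed

lemma legal_dom_seq_iff:
  "legal_dom_seq K S \<longleftrightarrow> set S \<subseteq> verts K \<and> dominated K S = verts K \<and> legal_from K {} S"
proof -
  have "(\<forall>i<length S. pn K S i \<noteq> {}) \<longleftrightarrow> legal_from K {} S"
    unfolding legal_from_nth by (auto simp: pn_eq_diff_dominated)
  then show ?thesis
    unfolding legal_dom_seq_def dominated_def using legal_from_imp_distinct by blast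
qed

lemma footprinter_eq_hd_filter:
  assumes "w \<in> dominated K S"
  shows "footprinter K S w = hd (filter (\<lambda>z. w \<in> cnbh K z) S)"
proof -
  from assms have "\<exists>x\<in>set S. w \<in> cnbh K x"
    by (simp add: dominated_def)
  then obtain as x bs where S: "S = as @ x # bs" and "w \<in> cnbh K x"
    and before: "\<forall>y\<in>set as. w \<notin> cnbh K y"
    by (rule split_list_first_propE)
  let ?i = "length as"
  have pn_i: "w \<in> pn K S ?i"
    using \<open>w \<in> cnbh K x\<close> before by (simp add: S pn_eq_diff_dominated dominated_def)
  have unique: "j = ?i" if "j < length S" "w \<in> pn K S j" for j
  proof (rule ccontr)
    assume "j \<noteq> ?i"
    then consider "j < ?i" | "?i < j" by linarith
    then show False
    proof cases
      case 1
      then show False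
        using that before by (auto simp: S pn_def nth_append)
    next
      case 2
      then have "x \<in> set (take j S)"
        by (simp add: S take_Cons')
      then show False
        using that \<open>w \<in> cnbh K x\<close> by (auto simp: pn_eq_diff_dominated dominated_def)
    qed
  qed
  have "footprinter K S w = x"
    unfolding footprinter_def
  proof (rule the_equality)
    show "\<exists>i<length S. S ! i = x \<and> w \<in> pn K S i"
      using pn_i by (intro exI[of _ ?i]) (simp add: S)
    show "y = x" if "\<exists>i<length S. S ! i = y \<and> w \<in> pn K S i" for y
      using that unique by (metis S nth_append_length)
  qed
  then show ?thesis
    using \<open>w \<in> cnbh K x\<close> before by (simp add: S)
qed

lemma hd_filter_mem: "filter P xs \<noteq> [] \<Longrightarrow> hd (filter P xs) \<in> set xs"
  using list.set_sel(1)[of "filter P xs"] by auto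

lemma first_in_mem: "set S \<inter> A \<noteq> {} \<Longrightarrow> first_in S A \<in> set S \<inter> A"
  unfolding first_in_def
  using list.set_sel(1)[of "filter (\<lambda>x. x \<in> A) S"] by (auto simp: filter_empty_conv)

lemma longest_legal_seq:
  assumes "graph K"
  obtains D where "legal_dom_seq K D"
    and "\<And>L. legal_from K {} L \<Longrightarrow> set L \<subseteq> verts K \<Longrightarrow> length L \<le> length D"
proof -
  let ?P = "\<lambda>L. legal_from K {} L \<and> set L \<subseteq> verts K"
  have bounded: "length L < Suc (card (verts K))" if "?P L" for L
  proof -
    have "length L = card (set L)"
      using that by (metis distinct_card legal_from_imp_distinct)
    also have "\<dots> \<le> card (verts K)"
      using that assms by (intro card_mono) (simp_all add: graph_def)
    finally show ?thesis
      by simp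
  qed
  have "\<exists>D. ?P D \<and> (\<forall>L. ?P L \<longrightarrow> length L \<le> length D)"
    using bounded by (intro Lattices_Big.ex_has_greatest_nat[of ?P "[]" length "Suc (card (verts K))"]) auto
  then obtain D where D: "?P D" and longest: "\<And>L. ?P L \<Longrightarrow> length L \<le> length D"
    by blast
  have dominating: "dominated K D = verts K"
  proof (rule ccontr)
    assume "dominated K D \<noteq> verts K"
    moreover have "dominated K D \<subseteq> verts K"
      using assms D by (simp add: dominated_subset_verts)
    ultimately obtain z where "z \<in> verts K" "z \<notin> dominated K D"
      by blast
    then have "?P (D @ [z])"
      using D cnbh_self[of z K] by (auto simp: legal_from_append)
    then show False
      using longest[of "D @ [z]"] by simp
  qed
  show thesis
  proof (rule that)
    show "legal_dom_seq K D"
      using D dominating by (simp add: legal_dom_seq_iff)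
    show "length L \<le> length D" if "legal_from K {} L" "set L \<subseteq> verts K" for L
      using that longest by blast
  qed
qed

lemma grundy_dom_num_eq_longest:
  assumes "legal_dom_seq K D"
    and longest: "\<And>L. legal_from K {} L \<Longrightarrow> set L \<subseteq> verts K \<Longrightarrow> length L \<le> length D"
  shows "grundy_dom_num K = length D"
proof -
  have le: "n \<le> length D" if "n \<in> {length S | S. legal_dom_seq K S}" for n
  proof -
    from that obtain S where "n = length S" "legal_dom_seq K S"
      by blast
    then show ?thesis
      using longest by (simp add: legal_dom_seq_iff)
  qed
  show ?thesis
    unfolding grundy_dom_num_def
  proof (rule Max_eqI)
    show "finite {length S | S. legal_dom_seq K S}"
      using le by (meson finite_atMost finite_subset subsetI atMost_iff)
    show "n \<le> length D" if "n \<in> {length S | S. legal_dom_seq K S}" for n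
      using le that .
    show "length D \<in> {length S | S. legal_dom_seq K S}"
      using assms(1) by blast
  qed
qed

lemma grundy_dom_num_attained:
  assumes "graph K"
  shows "\<exists>D. legal_dom_seq K D \<and> length D = grundy_dom_num K"
proof -
  obtain D where "legal_dom_seq K D"
    and "\<And>L. legal_from K {} L \<Longrightarrow> set L \<subseteq> verts K \<Longrightarrow> length L \<le> length D"
    using longest_legal_seq[OF assms] by blast
  then show ?thesis
    by (intro exI[of _ D]) (simp add: grundy_dom_num_eq_longest)
qed

lemma length_le_grundy_dom_num:
  assumes "graph K" "legal_from K {} L" "set L \<subseteq> verts K"
  shows "length L \<le> grundy_dom_num K"
proof -
  obtain D where "legal_dom_seq K D"
    and "\<And>L. legal_from K {} L \<Longrightarrow> set L \<subseteq> verts K \<Longrightarrow> length L \<le> length D"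
    using longest_legal_seq[OF assms(1)] by blast
  with assms(2,3) show ?thesis
    by (simp add: grundy_dom_num_eq_longest)
qed

fun prune :: "'b graph \<Rightarrow> 'b set \<Rightarrow> 'b set \<Rightarrow> 'b list \<Rightarrow> 'b list" where
  "prune K M A [] = []"
| "prune K M A (z # zs) =
     (if cnbh K z \<subseteq> A \<union> M then prune K M (A \<union> cnbh K z) zs
      else z # prune K M (A \<union> cnbh K z) zs)"

lemma set_prune_subset: "set (prune K M A L) \<subseteq> set L"
  by (induction L arbitrary: A) auto

lemma prune_mem: "z \<in> set (prune K M A L) \<Longrightarrow> \<not> cnbh K z \<subseteq> A \<union> M"
  by (induction L arbitrary: A) (auto split: if_splits)

lemma legal_from_prune:
  "legal_from K A L \<Longrightarrow> A - M = B - M \<Longrightarrow> M \<subseteq> B \<Longrightarrow> legal_from K B (prune K M A L)"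
proof (induction L arbitrary: A B)
  case (Cons z zs)
  show ?case
  proof (cases "cnbh K z \<subseteq> A \<union> M")
    case True
    then have "A \<union> cnbh K z - M = B - M"
      using Cons.prems(2) by (auto simp: set_eq_iff)
    with True Cons show ?thesis
      by simp
  next
    case False
    then have "\<not> cnbh K z \<subseteq> B"
      using Cons.prems(2,3) by (auto simp: set_eq_iff)
    moreover have "A \<union> cnbh K z - M = B \<union> cnbh K z - M"
      using Cons.prems(2) by (auto simp: set_eq_iff)
    ultimately show ?thesis
      using False Cons.IH[of "A \<union> cnbh K z" "B \<union> cnbh K z"] Cons.prems by auto
  qed
qed simp

lemma dominated_prune:
  "A - M = B - M \<Longrightarrow> M \<subseteq> B \<Longrightarrow> A \<union> dominated K L \<subseteq> B \<union> dominated K (prune K M A L)"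
proof (induction L arbitrary: A B)
  case Nil
  then show ?case
    by (auto simp: set_eq_iff)
next
  case (Cons z zs)
  show ?case
  proof (cases "cnbh K z \<subseteq> A \<union> M")
    case True
    then have "A \<union> cnbh K z - M = B - M"
      using Cons.prems(1) by (auto simp: set_eq_iff)
    with True Cons show ?thesis
      by auto
  next
    case False
    have "A \<union> cnbh K z - M = B \<union> cnbh K z - M"
      using Cons.prems(1) by (auto simp: set_eq_iff)
    then show ?thesis
      using False Cons.IH[of "A \<union> cnbh K z" "B \<union> cnbh K z"] Cons.prems by auto
  qed
qed

lemma filter_prune:
  "legal_from K A L \<Longrightarrow> (\<And>z. z \<in> set L \<Longrightarrow> P z \<Longrightarrow> cnbh K z \<inter> M = {}) \<Longrightarrow>
    filter P (prune K M A L) = filter P L"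
proof (induction L arbitrary: A)
  case (Cons z zs)
  have "P z \<Longrightarrow> \<not> cnbh K z \<subseteq> A \<union> M"
    using Cons.prems by auto
  then show ?case
    using Cons by auto
qed simp

lemma hd_filter_prune:
  assumes "w \<notin> A" "w \<notin> M"
  shows "hd (filter (\<lambda>z. w \<in> cnbh K z) (prune K M A L)) = hd (filter (\<lambda>z. w \<in> cnbh K z) L)"
  using assms
proof (induction L arbitrary: A)
  case (Cons z zs)
  show ?case
  proof (cases "w \<in> cnbh K z")
    case True
    then have "\<not> cnbh K z \<subseteq> A \<union> M"
      using Cons.prems by auto
    with True show ?thesis
      by simp
  next
    case False
    with Cons show ?thesis
      by auto
  qed
qed simp

locale xjoin_family =
  fixes G :: "'a graph" and R :: "'a \<Rightarrow> 'b graph"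
  assumes graph_G: "graph G"
    and graph_blocks: "\<And>v. v \<in> verts G \<Longrightarrow> graph (R v)"
    and blocks_disjoint:
      "\<And>u v. u \<in> verts G \<Longrightarrow> v \<in> verts G \<Longrightarrow> u \<noteq> v \<Longrightarrow> verts (R u) \<inter> verts (R v) = {}"
begin

abbreviation H :: "'b graph" where
  "H \<equiv> xjoin G R"

definition adjacent_blocks :: "'a \<Rightarrow> 'b set" where
  "adjacent_blocks v = (\<Union>u\<in>{u. (v, u) \<in> edges G}. verts (R u))"

lemma verts_xjoin: "verts H = (\<Union>v\<in>verts G. verts (R v))"
  by (simp add: xjoin_def verts_def)

lemma edges_xjoin:
  "edges H = (\<Union>v\<in>verts G. edges (R v)) \<union>
     {(x, y). \<exists>u w. (u, w) \<in> edges G \<and> x \<in> verts (R u) \<and> y \<in> verts (R w)}"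
  by (simp add: xjoin_def edges_def)

lemma block_unique:
  "u \<in> verts G \<Longrightarrow> v \<in> verts G \<Longrightarrow> z \<in> verts (R u) \<Longrightarrow> z \<in> verts (R v) \<Longrightarrow> u = v"
  using blocks_disjoint by blast

lemma edge_G: "(u, w) \<in> edges G \<Longrightarrow> u \<in> verts G \<and> w \<in> verts G \<and> u \<noteq> w \<and> (w, u) \<in> edges G"
  using graph_G unfolding graph_def irrefl_def sym_def by blast

lemma edge_block: "v \<in> verts G \<Longrightarrow> (x, y) \<in> edges (R v) \<Longrightarrow> x \<in> verts (R v) \<and> y \<in> verts (R v)"
  using graph_blocks unfolding graph_def by blast

lemma cnbh_block_subset: "v \<in> verts G \<Longrightarrow> z \<in> verts (R v) \<Longrightarrow> cnbh (R v) z \<subseteq> verts (R v)"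
  by (simp add: cnbh_subset_verts graph_blocks)

lemma edge_xjoinE:
  assumes "(x, y) \<in> edges H"
  obtains v where "v \<in> verts G" "(x, y) \<in> edges (R v)"
    | u w where "(u, w) \<in> edges G" "x \<in> verts (R u)" "y \<in> verts (R w)"
  using assms unfolding edges_xjoin by blast

lemma graph_xjoin: "graph H"
  unfolding graph_def
proof (intro conjI)
  show "finite (verts H)"
    using graph_G graph_blocks by (simp add: verts_xjoin graph_def)
  show "edges H \<subseteq> verts H \<times> verts H"
  proof (rule subrelI)
    fix x y
    assume "(x, y) \<in> edges H"
    then show "(x, y) \<in> verts H \<times> verts H"
    proof (cases rule: edge_xjoinE)
      case 1
      then show ?thesis
        using edge_block unfolding verts_xjoin by blast
    next
      case 2
      then show ?thesis
        using edge_G unfolding verts_xjoin by blast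
    qed
  qed
  show "sym (edges H)"
  proof (rule symI)
    fix x y
    assume "(x, y) \<in> edges H"
    then show "(y, x) \<in> edges H"
    proof (cases rule: edge_xjoinE)
      case (1 v)
      then have "(y, x) \<in> edges (R v)"
        using graph_blocks by (auto simp: graph_def dest: symD)
      with 1 show ?thesis
        unfolding edges_xjoin by blast
    next
      case (2 u w)
      then show ?thesis
        using edge_G unfolding edges_xjoin by blast
    qed
  qed
  show "irrefl (edges H)"
  proof (rule irreflI)
    fix x
    show "(x, x) \<notin> edges H"
    proof
      assume "(x, x) \<in> edges H"
      then show False
      proof (cases rule: edge_xjoinE)
        case (1 v)
        then show ?thesis
          using graph_blocks by (auto simp: graph_def dest: irreflD)
      next
        case (2 u w)
        then show ?thesis
          using edge_G block_unique by blast
      qed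
    qed
  qed
qed

lemma block_of_vertex:
  assumes "z \<in> verts H"
  obtains u where "u \<in> verts G" "z \<in> verts (R u)"
  using assms by (auto simp: verts_xjoin)

lemma adjacent_blocks_disjoint: "v \<in> verts G \<Longrightarrow> adjacent_blocks v \<inter> verts (R v) = {}"
  unfolding adjacent_blocks_def using edge_G block_unique by blast

lemma cnbh_xjoin:
  assumes "v \<in> verts G" "z \<in> verts (R v)"
  shows "cnbh H z = cnbh (R v) z \<union> adjacent_blocks v"
proof -
  have "(z, y) \<in> edges H \<longleftrightarrow> (z, y) \<in> edges (R v) \<or> y \<in> adjacent_blocks v" for y
  proof
    assume "(z, y) \<in> edges H"
    then show "(z, y) \<in> edges (R v) \<or> y \<in> adjacent_blocks v"
    proof (cases rule: edge_xjoinE)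
      case 1
      then show ?thesis
        using assms edge_block block_unique by metis
    next
      case (2 u w)
      then have "u = v"
        using edge_G block_unique assms by blast
      with 2 show ?thesis
        unfolding adjacent_blocks_def by blast
    qed
  next
    assume "(z, y) \<in> edges (R v) \<or> y \<in> adjacent_blocks v"
    then show "(z, y) \<in> edges H"
      using assms unfolding edges_xjoin adjacent_blocks_def by blast
  qed
  then show ?thesis
    unfolding cnbh_def by blast
qed

lemma cnbh_xjoin_inter_other_block:
  assumes "u \<in> verts G" "v \<in> verts G" "u \<noteq> v" "z \<in> verts (R u)"
  shows "cnbh H z \<inter> verts (R v) = (if (v, u) \<in> edges G then verts (R v) else {})"
proof -
  have "cnbh (R u) z \<inter> verts (R v) = {}"
    using cnbh_block_subset[OF assms(1,4)] blocks_disjoint assms by blast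
  moreover have "adjacent_blocks u \<inter> verts (R v) = (if (v, u) \<in> edges G then verts (R v) else {})"
  proof (cases "(v, u) \<in> edges G")
    case True
    then show ?thesis
      using edge_G unfolding adjacent_blocks_def by auto
  next
    case False
    have "w = v" if "(u, w) \<in> edges G" "y \<in> verts (R w)" "y \<in> verts (R v)" for w y
      using that assms(2) edge_G block_unique by blast
    with False show ?thesis
      using edge_G unfolding adjacent_blocks_def by auto
  qed
  ultimately show ?thesis
    by (simp add: cnbh_xjoin[OF assms(1,4)] Int_Un_distrib2)
qed

lemma legal_from_xjoin_if_block:
  assumes "v \<in> verts G" "legal_from (R v) (C \<inter> verts (R v)) L" "set L \<subseteq> verts (R v)"
  shows "legal_from H C L"
  using assms(2,3)
proof (induction L arbitrary: C)
  case (Cons z zs)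
  have z: "z \<in> verts (R v)"
    using Cons.prems by simp
  have "(C \<union> cnbh H z) \<inter> verts (R v) = C \<inter> verts (R v) \<union> cnbh (R v) z"
    using cnbh_xjoin[OF assms(1) z] cnbh_block_subset[OF assms(1) z] adjacent_blocks_disjoint[OF assms(1)]
    by blast
  with Cons show ?case
    using cnbh_xjoin[OF assms(1) z] cnbh_block_subset[OF assms(1) z] by auto
qed simp

lemma length_prune_block:
  assumes v: "v \<in> verts G"
    and "legal_from H A L" "set L \<subseteq> verts H" "adjacent_blocks v \<subseteq> A"
    and "legal_from (R v) {} E" "set E \<subseteq> verts (R v)" "dominated (R v) E \<subseteq> A"
  shows "\<exists>E'. legal_from (R v) {} E' \<and> set E' \<subseteq> verts (R v)
    \<and> length E' + length (prune H (verts (R v)) A L) = length E + length L"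
  using assms(2-)
proof (induction L arbitrary: A E)
  case (Cons z zs)
  let ?V = "verts (R v)" and ?A' = "A \<union> cnbh H z"
  have IH: "\<exists>E'. legal_from (R v) {} E' \<and> set E' \<subseteq> ?V
      \<and> length E' + length (prune H ?V ?A' zs) = length E + length zs"
    if "legal_from (R v) {} E" "set E \<subseteq> ?V" "dominated (R v) E \<subseteq> ?A'" for E
    using Cons.IH[of ?A' E] Cons.prems(1-3) that by auto
  show ?case
  proof (cases "cnbh H z \<subseteq> A \<union> ?V")
    case False
    then show ?thesis
      using IH[OF Cons.prems(4,5)] Cons.prems(6) by auto
  next
    case True
    have new: "\<not> cnbh H z \<subseteq> A"
      using Cons.prems(1) by simp
    \<comment> \<open>z is pruned, so its new neighbours lie in the block; z itself or one of them extends E\<close>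
    obtain y where y: "y \<in> ?V" "\<not> cnbh (R v) y \<subseteq> A" "cnbh (R v) y \<subseteq> ?A'"
    proof (cases "z \<in> ?V")
      case True
      then show ?thesis
        using that[of z] new cnbh_xjoin[OF v True] Cons.prems(3) by auto
    next
      case False
      obtain w where w: "w \<in> cnbh H z" "w \<notin> A" "w \<in> ?V"
        using True new by blast
      obtain u where u: "u \<in> verts G" "z \<in> verts (R u)"
        using Cons.prems(2) by (auto elim: block_of_vertex)
      with False v have "cnbh H z \<inter> ?V = (if (v, u) \<in> edges G then ?V else {})"
        by (intro cnbh_xjoin_inter_other_block) auto
      with w have "?V \<subseteq> cnbh H z"
        by (auto split: if_splits)
      then show ?thesis
        using that[of w] w cnbh_self[of w "R v"] cnbh_block_subset[OF v w(3)] by auto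
    qed
    have "legal_from (R v) {} (E @ [y])" "set (E @ [y]) \<subseteq> ?V" "dominated (R v) (E @ [y]) \<subseteq> ?A'"
      using Cons.prems(4-6) y by (auto simp: legal_from_append)
    from IH[OF this] show ?thesis
      using True by auto
  qed
qed auto

definition regular_block :: "'b list \<Rightarrow> 'a \<Rightarrow> bool" where
  "regular_block S v \<longleftrightarrow>
     (set S \<inter> verts (R v) \<noteq> {} \<and> first_in S (verts (R v)) \<in> self_footprinters H S
      \<longrightarrow> (\<forall>w\<in>verts (R v). footprinter H S w \<in> verts (R v))
        \<and> card (set S \<inter> verts (R v)) = grundy_dom_num (R v))"

end

locale block_exchange = xjoin_family +
  fixes v :: 'a and pre rest D :: "'b list" and x :: 'b
  assumes v: "v \<in> verts G"
    and legal_original: "legal_dom_seq H (pre @ x # rest)"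
    and pre_outside: "set pre \<inter> verts (R v) = {}"
    and x_block: "x \<in> verts (R v)"
    and x_self: "footprinter H (pre @ x # rest) x = x"
    and legal_D: "legal_dom_seq (R v) D"
    and length_D: "length D = grundy_dom_num (R v)"
begin

definition dominated_through_x :: "'b set" where
  "dominated_through_x = dominated H pre \<union> cnbh H x"

definition exchanged :: "'b list" where
  "exchanged = pre @ D @ prune H (verts (R v)) dominated_through_x rest"

lemma legal_original_unfolded:
  "set (pre @ x # rest) \<subseteq> verts H" "dominated H (pre @ x # rest) = verts H"
  "legal_from H {} pre" "legal_from H dominated_through_x rest"
  using legal_original
  by (simp_all add: legal_dom_seq_iff legal_from_append dominated_through_x_def)

lemma legal_D_unfolded: "set D \<subseteq> verts (R v)" "dominated (R v) D = verts (R v)" "legal_from (R v) {} D"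
  using legal_D by (simp_all add: legal_dom_seq_iff)

lemma x_notin_dominated_pre: "x \<notin> dominated H pre"
proof
  assume "x \<in> dominated H pre"
  then have "\<exists>y\<in>set pre. x \<in> cnbh H y"
    by (simp add: dominated_def)
  then obtain as y bs where pre: "pre = as @ y # bs" and "x \<in> cnbh H y"
    and "\<forall>z\<in>set as. x \<notin> cnbh H z"
    by (rule split_list_first_propE)
  then have "footprinter H (pre @ x # rest) x = y"
    by (simp add: footprinter_eq_hd_filter dominated_def)
  moreover have "y \<noteq> x"
    using pre pre_outside x_block by auto
  ultimately show False
    using x_self by simp
qed

lemma cnbh_pre_inter_block: "z \<in> set pre \<Longrightarrow> cnbh H z \<inter> verts (R v) = {}"
proof -
  assume z: "z \<in> set pre"
  then have "z \<in> verts H"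
    using legal_original_unfolded(1) by auto
  then obtain u where u: "u \<in> verts G" "z \<in> verts (R u)"
    by (rule block_of_vertex)
  with z pre_outside have "u \<noteq> v"
    by blast
  have "x \<notin> cnbh H z"
    using z x_notin_dominated_pre by (auto simp: dominated_def)
  with x_block have "cnbh H z \<inter> verts (R v) \<noteq> verts (R v)"
    by blast
  with cnbh_xjoin_inter_other_block[OF u(1) v \<open>u \<noteq> v\<close> u(2)] show ?thesis
    by (simp split: if_splits)
qed

lemma pre_inter_adjacent_blocks: "set pre \<inter> adjacent_blocks v = {}"
proof -
  have "z \<notin> adjacent_blocks v" if "z \<in> set pre" for z
  proof
    assume "z \<in> adjacent_blocks v"
    then obtain u where "(v, u) \<in> edges G" "z \<in> verts (R u)"
      unfolding adjacent_blocks_def by blast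
    then have "cnbh H z \<inter> verts (R v) = verts (R v)"
      using edge_G v by (subst cnbh_xjoin_inter_other_block) auto
    then show False
      using cnbh_pre_inter_block[OF that] x_block by auto
  qed
  then show ?thesis
    by blast
qed

lemma cnbh_xjoin_D: "d \<in> set D \<Longrightarrow> cnbh H d = cnbh (R v) d \<union> adjacent_blocks v"
  using cnbh_xjoin[OF v] legal_D_unfolded(1) by blast

lemma D_nonempty: "D \<noteq> []"
  using legal_D_unfolded(2) x_block by auto

lemma dominated_D: "dominated H D = verts (R v) \<union> adjacent_blocks v"
proof -
  have "dominated H D = dominated (R v) D \<union> adjacent_blocks v"
    using cnbh_xjoin_D D_nonempty unfolding dominated_def by auto
  then show ?thesis
    using legal_D_unfolded(2) by simp
qed

lemma dominated_through_x_eq: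
  "dominated_through_x = dominated H pre \<union> cnbh (R v) x \<union> adjacent_blocks v"
  using cnbh_xjoin[OF v x_block] by (auto simp: dominated_through_x_def)

lemma exchanged_legal: "legal_dom_seq H exchanged"
proof -
  let ?V = "verts (R v)" and ?B = "dominated H pre \<union> dominated H D"
  have same_outside: "dominated_through_x - ?V = ?B - ?V" and "?V \<subseteq> ?B"
    unfolding dominated_through_x_eq dominated_D using cnbh_block_subset[OF v x_block] by blast+
  have "dominated H pre \<inter> ?V = {}"
    using cnbh_pre_inter_block by (auto simp: dominated_def)
  then have "legal_from H (dominated H pre) D"
    using legal_from_xjoin_if_block[OF v, of "dominated H pre" D] legal_D_unfolded by simp
  moreover have "legal_from H ?B (prune H ?V dominated_through_x rest)"
    using legal_from_prune[OF legal_original_unfolded(4) same_outside \<open>?V \<subseteq> ?B\<close>] .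
  ultimately have legal: "legal_from H {} exchanged"
    using legal_original_unfolded(3) by (simp add: exchanged_def legal_from_append)
  have "?V \<subseteq> verts H"
    using v by (auto simp: verts_xjoin)
  then have in_H: "set exchanged \<subseteq> verts H"
    using legal_original_unfolded(1) legal_D_unfolded(1) set_prune_subset[of H ?V dominated_through_x rest]
    unfolding exchanged_def by auto
  have "verts H = dominated_through_x \<union> dominated H rest"
    using legal_original_unfolded(2) by (auto simp: dominated_through_x_def)
  also have "\<dots> \<subseteq> ?B \<union> dominated H (prune H ?V dominated_through_x rest)"
    using dominated_prune[OF same_outside \<open>?V \<subseteq> ?B\<close>] .
  also have "\<dots> = dominated H exchanged"
    by (auto simp: exchanged_def)
  finally have "dominated H exchanged = verts H"
    using dominated_subset_verts[OF graph_xjoin in_H] by blast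
  with legal in_H show ?thesis
    by (simp add: legal_dom_seq_iff)
qed

lemma length_le_exchanged: "length (pre @ x # rest) \<le> length exchanged"
proof -
  let ?V = "verts (R v)"
  have "dominated (R v) [x] \<subseteq> dominated_through_x"
    using dominated_through_x_eq by auto
  then obtain E where "legal_from (R v) {} E" "set E \<subseteq> ?V"
    and E: "length E + length (prune H ?V dominated_through_x rest) = 1 + length rest"
    using length_prune_block[OF v legal_original_unfolded(4), of "[x]"] legal_original_unfolded(1)
      dominated_through_x_eq x_block cnbh_self[of x "R v"]
    by auto
  then have "length E \<le> length D"
    using length_le_grundy_dom_num[OF graph_blocks[OF v]] length_D by simp
  with E show ?thesis
    by (simp add: exchanged_def)
qed

lemma pruned_outside_block: "set (prune H (verts (R v)) dominated_through_x rest) \<inter> verts (R v) = {}"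
proof -
  have "z \<notin> verts (R v)" if "z \<in> set (prune H (verts (R v)) dominated_through_x rest)" for z
  proof
    assume z: "z \<in> verts (R v)"
    have "\<not> cnbh H z \<subseteq> dominated_through_x \<union> verts (R v)"
      using prune_mem[OF that] .
    moreover have "adjacent_blocks v \<subseteq> dominated_through_x"
      using dominated_through_x_eq by blast
    ultimately show False
      using cnbh_xjoin[OF v z] cnbh_block_subset[OF v z] by blast
  qed
  then show ?thesis
    by blast
qed

lemma exchanged_inter_block: "set exchanged \<inter> verts (R v) = set D"
  using pre_outside pruned_outside_block legal_D_unfolded(1) by (auto simp: exchanged_def)

lemma footprinter_exchanged:
  "w \<in> verts H \<Longrightarrow> footprinter H exchanged w = hd (filter (\<lambda>z. w \<in> cnbh H z) exchanged)"
  using exchanged_legal by (simp add: footprinter_eq_hd_filter legal_dom_seq_iff)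

lemma footprinter_original:
  "w \<in> verts H \<Longrightarrow> footprinter H (pre @ x # rest) w = hd (filter (\<lambda>z. w \<in> cnbh H z) (pre @ x # rest))"
  using legal_original_unfolded(2) by (simp add: footprinter_eq_hd_filter)

lemma footprinter_exchanged_block:
  assumes w: "w \<in> verts (R v)"
  shows "footprinter H exchanged w \<in> verts (R v)"
proof -
  let ?P = "\<lambda>z. w \<in> cnbh H z"
  have "filter ?P pre = []"
    using cnbh_pre_inter_block w by (auto simp: filter_empty_conv)
  moreover have "filter ?P D \<noteq> []"
  proof -
    obtain d where "d \<in> set D" "w \<in> cnbh (R v) d"
      using legal_D_unfolded(2) w by (auto simp: dominated_def)
    then show ?thesis
      using cnbh_xjoin_D by (auto simp: filter_empty_conv)
  qed
  moreover have "w \<in> verts H"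
    using w v by (auto simp: verts_xjoin)
  ultimately have "footprinter H exchanged w = hd (filter ?P D)"
    using footprinter_exchanged[of w] by (simp add: exchanged_def)
  also have "\<dots> \<in> set D"
    using \<open>filter ?P D \<noteq> []\<close> by (rule hd_filter_mem)
  finally show ?thesis
    using legal_D_unfolded(1) by blast
qed

lemma regular_exchanged: "regular_block exchanged v"
proof -
  have "card (set exchanged \<inter> verts (R v)) = grundy_dom_num (R v)"
    using exchanged_inter_block length_D legal_from_imp_distinct[OF legal_D_unfolded(3)]
    by (simp add: distinct_card)
  then show ?thesis
    using footprinter_exchanged_block by (simp add: regular_block_def)
qed

lemma footprinter_exchanged_adjacent:
  assumes a: "a \<in> adjacent_blocks v"
  shows "footprinter H exchanged a \<noteq> a"
proof -
  let ?P = "\<lambda>z. a \<in> cnbh H z"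
  have "a \<in> verts H"
    using a edge_G unfolding adjacent_blocks_def verts_xjoin by blast
  then have fp: "footprinter H exchanged a = hd (filter ?P (pre @ D))" if "filter ?P (pre @ D) \<noteq> []"
    using that footprinter_exchanged[of a] by (simp add: exchanged_def hd_append)
  have "filter ?P D \<noteq> []"
    using D_nonempty cnbh_xjoin_D a by (cases D) auto
  then have "footprinter H exchanged a \<in> set pre \<union> set D"
    using fp hd_filter_mem[of ?P "pre @ D"] by auto
  moreover have "a \<notin> set pre \<union> set D"
    using a pre_inter_adjacent_blocks legal_D_unfolded(1) adjacent_blocks_disjoint[OF v] by blast
  ultimately show ?thesis
    by metis
qed

lemma filter_exchanged:
  assumes "\<And>z. P z \<Longrightarrow> cnbh H z \<inter> verts (R v) = {}"
  shows "filter P exchanged = filter P (pre @ x # rest)"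
proof -
  have "\<not> P z" if "z \<in> verts (R v)" for z
    using assms[of z] that cnbh_self[of z H] by blast
  then have "filter P D = []" "\<not> P x"
    using legal_D_unfolded(1) x_block by (auto simp: filter_empty_conv)
  moreover have "filter P (prune H (verts (R v)) dominated_through_x rest) = filter P rest"
    using filter_prune[OF legal_original_unfolded(4)] assms by blast
  ultimately show ?thesis
    by (simp add: exchanged_def)
qed

lemma footprinter_exchanged_far:
  assumes w: "w \<in> verts H" "w \<notin> verts (R v)" "w \<notin> adjacent_blocks v"
  shows "footprinter H exchanged w = footprinter H (pre @ x # rest) w"
proof -
  let ?P = "\<lambda>z. w \<in> cnbh H z"
  have "\<not> ?P z" if "z \<in> verts (R v)" for z
    using w cnbh_xjoin[OF v that] cnbh_block_subset[OF v that] by blast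
  then have "filter ?P D = []" "\<not> ?P x"
    using legal_D_unfolded(1) x_block by (auto simp: filter_empty_conv)
  moreover have "hd (filter ?P (prune H (verts (R v)) dominated_through_x rest)) = hd (filter ?P rest)"
    if "filter ?P pre = []"
  proof (rule hd_filter_prune)
    show "w \<notin> dominated_through_x"
      using that \<open>\<not> ?P x\<close> by (auto simp: dominated_through_x_def dominated_def filter_empty_conv)
  qed (use w in simp)
  ultimately show ?thesis
    using footprinter_exchanged[OF w(1)] footprinter_original[OF w(1)]
    by (cases "filter ?P pre = []") (simp_all add: exchanged_def)
qed

lemma regular_exchanged_adjacent:
  assumes "(v, v') \<in> edges G"
  shows "regular_block exchanged v'"
proof -
  have "first_in exchanged (verts (R v')) \<notin> self_footprinters H exchanged"
    if "set exchanged \<inter> verts (R v') \<noteq> {}"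
  proof -
    have "first_in exchanged (verts (R v')) \<in> adjacent_blocks v"
      using first_in_mem[OF that] assms unfolding adjacent_blocks_def by blast
    then show ?thesis
      using footprinter_exchanged_adjacent by (simp add: self_footprinters_def)
  qed
  then show ?thesis
    unfolding regular_block_def by blast
qed

lemma regular_exchanged_far:
  assumes v': "v' \<in> verts G" "v' \<noteq> v" "(v, v') \<notin> edges G"
  shows "regular_block exchanged v' \<longleftrightarrow> regular_block (pre @ x # rest) v'"
proof -
  let ?W = "verts (R v')" and ?S = "pre @ x # rest"
  have "cnbh H z \<inter> verts (R v) = {}" if "z \<in> ?W" for z
    using cnbh_xjoin_inter_other_block[OF v'(1) v v'(2) that] v'(3) by simp
  then have same_filter: "filter (\<lambda>z. z \<in> ?W) exchanged = filter (\<lambda>z. z \<in> ?W) ?S"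
    by (rule filter_exchanged)
  then have same_set: "set exchanged \<inter> ?W = set ?S \<inter> ?W"
    by (metis inf_commute inter_set_filter)
  have same_first: "first_in exchanged ?W = first_in ?S ?W"
    using same_filter by (simp only: first_in_def)
  have "?W \<inter> verts (R v) = {}"
    using blocks_disjoint v v' by blast
  moreover have "?W \<inter> adjacent_blocks v = {}"
    using v' edge_G block_unique unfolding adjacent_blocks_def by blast
  ultimately have same_fp: "footprinter H exchanged w = footprinter H ?S w" if "w \<in> ?W" for w
    using that v' footprinter_exchanged_far[of w] by (auto simp: verts_xjoin)
  have "first_in exchanged ?W \<in> self_footprinters H exchanged \<longleftrightarrow> first_in ?S ?W \<in> self_footprinters H ?S"
    if "set ?S \<inter> ?W \<noteq> {}"
    using first_in_mem[OF that] same_first same_fp by (simp add: self_footprinters_def)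
  then show ?thesis
    unfolding regular_block_def using same_set same_fp by auto
qed

end

context xjoin_family
begin

lemma regular_block_exchange:
  assumes S: "grundy_dom_seq H S" and v: "v \<in> verts G" and irregular: "\<not> regular_block S v"
  obtains S' where "grundy_dom_seq H S'" "regular_block S' v"
    "\<And>v'. v' \<in> verts G \<Longrightarrow> regular_block S v' \<Longrightarrow> regular_block S' v'"
proof -
  let ?V = "verts (R v)"
  from irregular have meets: "\<exists>z\<in>set S. z \<in> ?V" and self: "first_in S ?V \<in> self_footprinters H S"
    unfolding regular_block_def by auto
  from meets obtain pre x rest where S_split: "S = pre @ x # rest" and x: "x \<in> ?V"
    and pre: "\<forall>z\<in>set pre. z \<notin> ?V"
    by (rule split_list_first_propE)
  have "first_in S ?V = x"
    using pre x by (simp add: first_in_def S_split filter_empty_conv)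
  obtain D where "legal_dom_seq (R v) D" "length D = grundy_dom_num (R v)"
    using grundy_dom_num_attained[OF graph_blocks[OF v]] by blast
  with S S_split x pre self \<open>first_in S ?V = x\<close> v
  interpret block_exchange G R v pre rest D x
    by unfold_locales (auto simp: grundy_dom_seq_def self_footprinters_def)
  show thesis
  proof (rule that[of exchanged])
    show "grundy_dom_seq H exchanged"
      using S exchanged_legal length_le_exchanged unfolding grundy_dom_seq_def S_split
      by (meson le_trans)
    show "regular_block exchanged v"
      by (rule regular_exchanged)
    show "regular_block exchanged v'" if "v' \<in> verts G" "regular_block S v'" for v'
      using that regular_exchanged regular_exchanged_adjacent regular_exchanged_far[of v'] S_split
      by blast
  qed
qed

lemma regular_grundy_dom_seq_exists:
  assumes "grundy_dom_seq H S"
  shows "\<exists>S'. grundy_dom_seq H S' \<and> (\<forall>v\<in>verts G. regular_block S' v)"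
  using assms
proof (induction "card {v \<in> verts G. \<not> regular_block S v}" arbitrary: S rule: less_induct)
  case less
  show ?case
  proof (cases "\<forall>v\<in>verts G. regular_block S v")
    case True
    with less.prems show ?thesis
      by blast
  next
    case False
    then obtain v where v: "v \<in> verts G" "\<not> regular_block S v"
      by blast
    obtain S' where S': "grundy_dom_seq H S'" "regular_block S' v"
      "\<And>v'. v' \<in> verts G \<Longrightarrow> regular_block S v' \<Longrightarrow> regular_block S' v'"
      using regular_block_exchange[OF less.prems v] by blast
    have "{v \<in> verts G. \<not> regular_block S' v} \<subset> {v \<in> verts G. \<not> regular_block S v}"
      using S' v by blast
    then have "card {v \<in> verts G. \<not> regular_block S' v} < card {v \<in> verts G. \<not> regular_block S v}"
      using graph_G by (intro psubset_card_mono) (simp_all add: graph_def)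
    with less.hyps S'(1) show ?thesis
      by blast
  qed
qed

end

theorem lemma2:
  fixes G :: "'a graph" and R :: "'a \<Rightarrow> 'b graph" and S :: "'b list"
  assumes "graph G"
    and "\<forall>v\<in>verts G. graph (R v)"
    and "\<forall>u\<in>verts G. \<forall>v\<in>verts G. u \<noteq> v \<longrightarrow> verts (R u) \<inter> verts (R v) = {}"
    and "grundy_dom_seq (xjoin G R) S"
  shows "\<exists>S'. grundy_dom_seq (xjoin G R) S' \<and>
    (\<forall>v\<in>verts G. set S' \<inter> verts (R v) \<noteq> {}
        \<and> first_in S' (verts (R v)) \<in> self_footprinters (xjoin G R) S'
      \<longrightarrow> (\<forall>w\<in>verts (R v). footprinter (xjoin G R) S' w \<in> verts (R v))
        \<and> card (set S' \<inter> verts (R v)) = grundy_dom_num (R v))"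
proof -
  interpret xjoin_family G R
    using assms(1-3) by unfold_locales blast+
  show ?thesis
    using regular_grundy_dom_seq_exists[OF assms(4)] unfolding regular_block_def .
qed

end
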